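(* Let $n\ge 2$ and $d\ge 1$, and let $\mathbf{T}=(T_{p-q})_{p,q=0}^{n-1}$ and $\mathbf{U}=(U_{p-q})_{p,q=0}^{n-1}$ be block Toeplitz matrices with $T_j,U_j\in\mathcal{M}_{d\times d}(\mathbb{C})$ for $|j|\le n-1$. Then the product $\mathbf{T}\mathbf{U}$ (as an $nd\times nd$ matrix) is a block Toeplitz matrix if and only if $$T_pU_{q-n}=T_{p-n}U_q\quad\text{for all } p,q\in\{1,2,\dots,n-1\}.$$
   Context: A block Toeplitz matrix $\mathbf{T}=(T_{p-q})_{p,q=0}^{n-1}$ is an $nd\times nd$ complex matrix partitioned into $n\times n$ blocks of size $d\times d$, whose $(p,q)$ block ($0\le p,q\le n-1$) equals $T_{p-q}$ for some matrices $T_{-(n-1)},\dots,T_{n-1}\in\mathcal{M}_{d\times d}(\mathbb{C})$. $\mathcal{M}_{d\times d}(\mathbb{C})$ denotes the algebra of complex $d\times d$ matrices. *)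

theory Defs
  imports "Jordan_Normal_Form.Matrix"
begin

definition block_toeplitz :: "nat \<Rightarrow> nat \<Rightarrow> (int \<Rightarrow> complex mat) \<Rightarrow> complex mat" where
  "block_toeplitz n d T =
     mat (n * d) (n * d)
       (\<lambda>(i, k). T (int (i div d) - int (k div d)) $$ (i mod d, k mod d))"

definition is_block_toeplitz :: "nat \<Rightarrow> nat \<Rightarrow> complex mat \<Rightarrow> bool" where
  "is_block_toeplitz n d M \<longleftrightarrow>
     M \<in> carrier_mat (n * d) (n * d) \<and>
     (\<exists>S. (\<forall>j. \<bar>j\<bar> \<le> int n - 1 \<longrightarrow> S j \<in> carrier_mat d d) \<and> M = block_toeplitz n d S)"

end

theory Submission
  imports Defs
begin

text \<open>The (a, b) block of TU is P a b = \<Sum>r<n. T (a - r) * U (r - b), and TU is block Toeplitz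
  iff P is constant along diagonals, i.e. P (a+1) (b+1) = P a b. Passing from (a, b) to
  (a+1, b+1) shifts the summation index by one, so the difference telescopes to
  T p * U (q - n) - T (p - n) * U q with p = a+1 and q = n-1-b.\<close>

definition block_matrix :: "nat \<Rightarrow> nat \<Rightarrow> (nat \<Rightarrow> nat \<Rightarrow> 'a mat) \<Rightarrow> 'a mat" where
  "block_matrix n d G =
     mat (n * d) (n * d) (\<lambda>(i, k). G (i div d) (k div d) $$ (i mod d, k mod d))"

lemma block_toeplitz_eq_block_matrix:
  "block_toeplitz n d T = block_matrix n d (\<lambda>a b. T (int a - int b))"
  by (simp add: block_toeplitz_def block_matrix_def)

lemma block_matrix_carrier: "block_matrix n d G \<in> carrier_mat (n * d) (n * d)"
  by (simp add: block_matrix_def)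

lemma block_index_bounds:
  fixes i n d :: nat
  assumes "i < n * d"
  shows "i div d < n" "i mod d < d"
proof -
  have "d > 0" using assms by (cases d) auto
  then show "i div d < n" "i mod d < d"
    using assms by (simp_all add: less_mult_imp_div_less)
qed

lemma block_index_recompose:
  fixes a x n d :: nat
  assumes "a < n" "x < d"
  shows "a * d + x < n * d" "(a * d + x) div d = a" "(a * d + x) mod d = x"
proof -
  have "a * d + x < Suc a * d" using assms(2) by simp
  also have "\<dots> \<le> n * d" using assms(1) by (intro mult_right_mono) auto
  finally show "a * d + x < n * d" .
  show "(a * d + x) div d = a" "(a * d + x) mod d = x" using assms(2) by auto
qed

lemma index_block_matrix:
  assumes "a < n" "b < n" "x < d" "y < d"
  shows "block_matrix n d G $$ (a * d + x, b * d + y) = G a b $$ (x, y)"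
  using assms by (simp add: block_matrix_def block_index_recompose)

lemma block_matrix_eq_iff:
  assumes "\<And>a b. a < n \<Longrightarrow> b < n \<Longrightarrow> G a b \<in> carrier_mat d d"
    and "\<And>a b. a < n \<Longrightarrow> b < n \<Longrightarrow> H a b \<in> carrier_mat d d"
  shows "block_matrix n d G = block_matrix n d H \<longleftrightarrow> (\<forall>a<n. \<forall>b<n. G a b = H a b)"
proof
  assume eq: "block_matrix n d G = block_matrix n d H"
  show "\<forall>a<n. \<forall>b<n. G a b = H a b"
  proof (intro allI impI)
    fix a b assume ab: "a < n" "b < n"
    show "G a b = H a b"
    proof (rule eq_matI)
      fix x y assume "x < dim_row (H a b)" "y < dim_col (H a b)"
      with assms(2)[OF ab] have "x < d" "y < d" by auto
      with ab eq show "G a b $$ (x, y) = H a b $$ (x, y)"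
        by (metis index_block_matrix)
    qed (use assms(1)[OF ab] assms(2)[OF ab] in auto)
  qed
next
  assume "\<forall>a<n. \<forall>b<n. G a b = H a b"
  then show "block_matrix n d G = block_matrix n d H"
    by (auto simp: block_matrix_def block_index_bounds intro!: cong_mat)
qed

lemma sum_lessThan_mult_blocks:
  fixes n d :: nat
  shows "(\<Sum>l<n * d. g l) = (\<Sum>r<n. \<Sum>s<d. g (r * d + s))"
proof -
  have "(\<Sum>l<n * d. g l) = (\<Sum>r<n. sum g {r * d..<r * d + d})"
    using sum.nat_group[of g d n] by simp
  also have "\<dots> = (\<Sum>r<n. \<Sum>s<d. g (r * d + s))"
    using sum.atLeastLessThan_shift_0[of g "_ * d" "_ * d + d"]
    by (simp add: atLeast0LessThan comp_def)
  finally show ?thesis .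
qed

lemma mult_block_matrix:
  fixes G H :: "nat \<Rightarrow> nat \<Rightarrow> 'a :: semiring_0 mat"
  assumes "\<And>a b. a < n \<Longrightarrow> b < n \<Longrightarrow> G a b \<in> carrier_mat d d"
    and "\<And>a b. a < n \<Longrightarrow> b < n \<Longrightarrow> H a b \<in> carrier_mat d d"
  shows "block_matrix n d G * block_matrix n d H =
    block_matrix n d (\<lambda>a b. mat d d (\<lambda>(x, y). \<Sum>r<n. (G a r * H r b) $$ (x, y)))"
    (is "_ = block_matrix n d ?P")
proof (rule eq_matI)
  fix i k assume "i < dim_row (block_matrix n d ?P)" "k < dim_col (block_matrix n d ?P)"
  then have ik: "i < n * d" "k < n * d" by (simp_all add: block_matrix_def)
  have "(block_matrix n d G * block_matrix n d H) $$ (i, k) =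
      (\<Sum>l<n * d. block_matrix n d G $$ (i, l) * block_matrix n d H $$ (l, k))"
    using ik by (simp add: block_matrix_def scalar_prod_def atLeast0LessThan)
  also have "\<dots> = (\<Sum>r<n. \<Sum>s<d.
      G (i div d) r $$ (i mod d, s) * H r (k div d) $$ (s, k mod d))"
    unfolding sum_lessThan_mult_blocks
    using ik by (intro sum.cong refl) (simp add: block_matrix_def block_index_recompose)
  also have "\<dots> = (\<Sum>r<n. (G (i div d) r * H r (k div d)) $$ (i mod d, k mod d))"
  proof (intro sum.cong refl)
    fix r assume "r \<in> {..<n}"
    then have "G (i div d) r \<in> carrier_mat d d" "H r (k div d) \<in> carrier_mat d d"
      using ik assms by (simp_all add: block_index_bounds)
    then show "(\<Sum>s<d. G (i div d) r $$ (i mod d, s) * H r (k div d) $$ (s, k mod d)) =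
        (G (i div d) r * H r (k div d)) $$ (i mod d, k mod d)"
      using ik by (simp add: block_index_bounds scalar_prod_def atLeast0LessThan)
  qed
  finally show "(block_matrix n d G * block_matrix n d H) $$ (i, k) = block_matrix n d ?P $$ (i, k)"
    using ik by (simp add: block_matrix_def block_index_bounds)
qed (simp_all add: block_matrix_def)

lemma diagonal_shift_invariant:
  fixes G :: "nat \<Rightarrow> nat \<Rightarrow> 'a"
  assumes step: "\<And>a b. Suc a < n \<Longrightarrow> Suc b < n \<Longrightarrow> G (Suc a) (Suc b) = G a b"
    and "a + m < n" "b + m < n"
  shows "G (a + m) (b + m) = G a b"
  using assms(2,3) by (induction m) (simp_all add: step)

lemma is_block_toeplitz_block_matrix_iff:
  assumes carrier: "\<And>a b. a < n \<Longrightarrow> b < n \<Longrightarrow> G a b \<in> carrier_mat d d"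
  shows "is_block_toeplitz n d (block_matrix n d G) \<longleftrightarrow>
    (\<forall>a b. Suc a < n \<longrightarrow> Suc b < n \<longrightarrow> G (Suc a) (Suc b) = G a b)"
proof
  assume "is_block_toeplitz n d (block_matrix n d G)"
  then obtain S where S: "\<And>j. \<bar>j\<bar> \<le> int n - 1 \<Longrightarrow> S j \<in> carrier_mat d d"
    and eq: "block_matrix n d G = block_matrix n d (\<lambda>a b. S (int a - int b))"
    unfolding is_block_toeplitz_def block_toeplitz_eq_block_matrix by blast
  have "\<forall>a<n. \<forall>b<n. G a b = S (int a - int b)"
    using eq by (subst (asm) block_matrix_eq_iff) (auto intro: carrier S)
  then show "\<forall>a b. Suc a < n \<longrightarrow> Suc b < n \<longrightarrow> G (Suc a) (Suc b) = G a b"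
    by simp
next
  assume step: "\<forall>a b. Suc a < n \<longrightarrow> Suc b < n \<longrightarrow> G (Suc a) (Suc b) = G a b"
  define S where "S j = (if 0 \<le> j then G (nat j) 0 else G 0 (nat (- j)))" for j
  have S_carrier: "S j \<in> carrier_mat d d" if "\<bar>j\<bar> \<le> int n - 1" for j
    using that by (auto simp: S_def intro!: carrier)
  have "G a b = S (int a - int b)" if "a < n" "b < n" for a b
  proof (cases "b \<le> a")
    case True
    then have "nat (int a - int b) = a - b" by simp
    then show ?thesis
      using diagonal_shift_invariant[of n G "a - b" b 0] True step that by (simp add: S_def)
  next
    case False
    then have "nat (int b - int a) = b - a" by simp
    then show ?thesis
      using diagonal_shift_invariant[of n G 0 a "b - a"] False step that by (simp add: S_def)
  qed
  then have "block_matrix n d G = block_toeplitz n d S"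
    unfolding block_toeplitz_eq_block_matrix
    by (subst block_matrix_eq_iff) (auto intro: carrier S_carrier)
  then show "is_block_toeplitz n d (block_matrix n d G)"
    unfolding is_block_toeplitz_def using S_carrier block_matrix_carrier by blast
qed

definition toeplitz_product_block ::
    "nat \<Rightarrow> nat \<Rightarrow> (int \<Rightarrow> 'a :: semiring_0 mat) \<Rightarrow> (int \<Rightarrow> 'a mat) \<Rightarrow> nat \<Rightarrow> nat \<Rightarrow> 'a mat" where
  "toeplitz_product_block n d T U a b =
     mat d d (\<lambda>(x, y). \<Sum>r<n. (T (int a - int r) * U (int r - int b)) $$ (x, y))"

lemma mult_block_toeplitz:
  assumes "\<And>j. \<bar>j\<bar> \<le> int n - 1 \<Longrightarrow> T j \<in> carrier_mat d d"
    and "\<And>j. \<bar>j\<bar> \<le> int n - 1 \<Longrightarrow> U j \<in> carrier_mat d d"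
  shows "block_toeplitz n d T * block_toeplitz n d U =
    block_matrix n d (toeplitz_product_block n d T U)"
  unfolding block_toeplitz_eq_block_matrix toeplitz_product_block_def
  by (rule mult_block_matrix) (auto intro!: assms)

lemma toeplitz_product_block_Suc_diff:
  fixes T U :: "int \<Rightarrow> 'a :: ring mat"
  assumes "x < d" "y < d"
  shows "toeplitz_product_block n d T U (Suc a) (Suc b) $$ (x, y)
           - toeplitz_product_block n d T U a b $$ (x, y) =
         (T (int a + 1) * U (int n - 1 - int b - int n)) $$ (x, y)
           - (T (int a + 1 - int n) * U (int n - 1 - int b)) $$ (x, y)"
proof -
  define h where "h r = (T (int a - r) * U (r - int b)) $$ (x, y)" for r
  have "toeplitz_product_block n d T U (Suc a) (Suc b) $$ (x, y) = (\<Sum>r<n. h (int r - 1))"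
    using assms by (simp add: toeplitz_product_block_def h_def algebra_simps)
  moreover have "toeplitz_product_block n d T U a b $$ (x, y) = (\<Sum>r<n. h (int r))"
    using assms by (simp add: toeplitz_product_block_def h_def)
  moreover have "(\<Sum>r<n. h (int r - 1) - h (int r)) = h (- 1) - h (int n - 1)"
    using sum_lessThan_telescope'[of "\<lambda>k. h (int k - 1)" n] by simp
  moreover have "h (- 1) = (T (int a + 1) * U (int n - 1 - int b - int n)) $$ (x, y)"
    and "h (int n - 1) = (T (int a + 1 - int n) * U (int n - 1 - int b)) $$ (x, y)"
    by (simp_all add: h_def algebra_simps)
  ultimately show ?thesis
    by (simp add: sum_subtractf)
qed

lemma toeplitz_product_block_Suc_eq_iff:
  fixes T U :: "int \<Rightarrow> 'a :: ring mat"
  assumes "T (int a + 1) \<in> carrier_mat d d" "T (int a + 1 - int n) \<in> carrier_mat d d"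
    and "U (int n - 1 - int b - int n) \<in> carrier_mat d d" "U (int n - 1 - int b) \<in> carrier_mat d d"
  shows "toeplitz_product_block n d T U (Suc a) (Suc b) = toeplitz_product_block n d T U a b \<longleftrightarrow>
    T (int a + 1) * U (int n - 1 - int b - int n) = T (int a + 1 - int n) * U (int n - 1 - int b)"
proof -
  have "toeplitz_product_block n d T U (Suc a) (Suc b) = toeplitz_product_block n d T U a b \<longleftrightarrow>
      (\<forall>x<d. \<forall>y<d. toeplitz_product_block n d T U (Suc a) (Suc b) $$ (x, y)
                     - toeplitz_product_block n d T U a b $$ (x, y) = 0)"
    by (auto simp: mat_eq_iff toeplitz_product_block_def)
  also have "\<dots> \<longleftrightarrow> (\<forall>x<d. \<forall>y<d. (T (int a + 1) * U (int n - 1 - int b - int n)) $$ (x, y)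
                     - (T (int a + 1 - int n) * U (int n - 1 - int b)) $$ (x, y) = 0)"
    by (simp add: toeplitz_product_block_Suc_diff)
  also have "\<dots> \<longleftrightarrow>
      T (int a + 1) * U (int n - 1 - int b - int n) = T (int a + 1 - int n) * U (int n - 1 - int b)"
    using assms by (auto simp: mat_eq_iff)
  finally show ?thesis .
qed

lemma all_Suc_less_iff_ball_Icc:
  fixes n :: nat
  shows "(\<forall>a b. Suc a < n \<longrightarrow> Suc b < n \<longrightarrow> P (int a + 1) (int n - 1 - int b)) \<longleftrightarrow>
    (\<forall>p \<in> {1..int n - 1}. \<forall>q \<in> {1..int n - 1}. P p q)"
proof
  assume P: "\<forall>a b. Suc a < n \<longrightarrow> Suc b < n \<longrightarrow> P (int a + 1) (int n - 1 - int b)"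
  show "\<forall>p \<in> {1..int n - 1}. \<forall>q \<in> {1..int n - 1}. P p q"
  proof (intro ballI)
    fix p q assume "p \<in> {1..int n - 1}" "q \<in> {1..int n - 1}"
    then have "Suc (nat (p - 1)) < n" "Suc (nat (int n - 1 - q)) < n"
      and "p = int (nat (p - 1)) + 1" "q = int n - 1 - int (nat (int n - 1 - q))"
      by auto
    then show "P p q" using P by metis
  qed
qed auto

theorem lemma3p1:
  fixes n d :: nat and T U :: "int \<Rightarrow> complex mat"
  assumes "n \<ge> 2" and "d \<ge> 1"
    and "\<And>j. \<bar>j\<bar> \<le> int n - 1 \<Longrightarrow> T j \<in> carrier_mat d d"
    and "\<And>j. \<bar>j\<bar> \<le> int n - 1 \<Longrightarrow> U j \<in> carrier_mat d d"
  shows "is_block_toeplitz n d (block_toeplitz n d T * block_toeplitz n d U) \<longleftrightarrow>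
    (\<forall>p \<in> {1..int n - 1}. \<forall>q \<in> {1..int n - 1}.
       T p * U (q - int n) = T (p - int n) * U q)"
proof -
  have prod: "block_toeplitz n d T * block_toeplitz n d U =
      block_matrix n d (toeplitz_product_block n d T U)"
    by (rule mult_block_toeplitz[OF assms(3,4)])
  have "is_block_toeplitz n d (block_toeplitz n d T * block_toeplitz n d U) \<longleftrightarrow>
      (\<forall>a b. Suc a < n \<longrightarrow> Suc b < n \<longrightarrow>
         toeplitz_product_block n d T U (Suc a) (Suc b) = toeplitz_product_block n d T U a b)"
    unfolding prod
    by (rule is_block_toeplitz_block_matrix_iff) (simp add: toeplitz_product_block_def)
  also have "\<dots> \<longleftrightarrow> (\<forall>a b. Suc a < n \<longrightarrow> Suc b < n \<longrightarrow>
      T (int a + 1) * U (int n - 1 - int b - int n) = T (int a + 1 - int n) * U (int n - 1 - int b))"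
  proof -
    have "toeplitz_product_block n d T U (Suc a) (Suc b) = toeplitz_product_block n d T U a b \<longleftrightarrow>
        T (int a + 1) * U (int n - 1 - int b - int n) = T (int a + 1 - int n) * U (int n - 1 - int b)"
      if "Suc a < n" "Suc b < n" for a b
      by (rule toeplitz_product_block_Suc_eq_iff) (use that in \<open>auto intro!: assms(3,4)\<close>)
    then show ?thesis by blast
  qed
  also have "\<dots> \<longleftrightarrow> (\<forall>p \<in> {1..int n - 1}. \<forall>q \<in> {1..int n - 1}.
      T p * U (q - int n) = T (p - int n) * U q)"
    by (rule all_Suc_less_iff_ball_Icc)
  finally show ?thesis .
qed

end
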